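(* Let $n,k,s$ be positive integers with $2\le s\le\lfloor n/k\rfloor$, write $n=ds+s_0$ with $d=\lfloor n/s\rfloor$, and assume $s_0<\min\{d,s\}$. The Cubic Code is a valid exact-repair (indeed repair-by-transfer) scheme for the Fixed Cluster Repair System with parameters $(n,k,s)$ storing a file of size $M$, with storage $\alpha$ equal to its repair bandwidth $\gamma$, where $$\gamma_{cc}(n,k,s)=\begin{cases}\dfrac{Md^{s}}{d^{s+1}-(d-\lceil\frac{k}{s+1}\rceil)^{s_1}(d-\lfloor\frac{k}{s+1}\rfloor)^{s+1-s_1}} & \text{if } s_0\ge\lfloor\frac{k}{s+1}\rfloor,\\[3mm] \dfrac{Md^{s}}{d^{s+1}-(d-s_0)(d-\lceil\frac{k-s_0}{s}\rceil)^{s_2}(d-\lfloor\frac{k-s_0}{s}\rfloor)^{s-s_2}} & \text{if } s_0<\lfloor\frac{k}{s+1}\rfloor,\end{cases}$$ with $s_1=k\bmod(s+1)$ and $s_2=(k-s_0)\bmod s$.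
   Context: FCRS: $n=ds+s_0$ servers in clusters $1,\dots,s$ of size $d$ and cluster $s+1$ of size $s_0$; server $(i,j)$ stores at most $\alpha$ units; any $k$ servers (from any clusters) must recover the file; a failed server $(r,\ell)$ is repaired (exactly) by downloading $\beta$ units from each of the $d$ servers of any cluster $i\in[s]$, $i\ne r$; repair bandwidth $\gamma=d\beta$. Cubic Code: split the file into $m$ independent chunks of size $M/m$ and encode them with a $(d^{s+1},m)$ MDS code whose codeword symbols $C_b$ are indexed by strings $b=b_{s+1}\cdots b_1$ with $b_i\in[d]$. Server $(i,j)$, $(i,j)\in([s]\times[d])\cup(\{s+1\}\times[s_0])$, stores $\{C_b: b_i=j\}$. To repair $(r,\ell)$ from cluster $i$, server $(i,j)$ sends $\{C_b:b_i=j,\ b_r=\ell\}$. The number of chunks is $m=\min\{d^{s+1}-\prod_{i=1}^{s+1}(d-k_i):k_i\in\mathbb Z_{\ge0},\ \sum_{i}k_i=k,\ k_{s+1}\le s_0\}$, the number of distinct codeword symbols held by the worst-case set of $k$ servers. *)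

theory Defs
  imports Complex_Main
begin

text \<open>Conventions: cluster indices are 1..s+1, positions inside a cluster and the
  letters of the alphabet [d] are 0-based (0..<d).  A codeword index
  b = b_{s+1}...b_1 is a function nat => nat which is < d on 1..s+1 and 0 elsewhere.\<close>

definition cc_words :: "nat \<Rightarrow> nat \<Rightarrow> (nat \<Rightarrow> nat) set" where
  "cc_words d s = {b. (\<forall>i\<in>{1..s+1}. b i < d) \<and> (\<forall>i. i \<notin> {1..s+1} \<longrightarrow> b i = 0)}"

definition fcrs_servers :: "nat \<Rightarrow> nat \<Rightarrow> nat \<Rightarrow> (nat \<times> nat) set" where
  "fcrs_servers d s s0 = {(i,j). 1 \<le> i \<and> i \<le> s \<and> j < d} \<union> {(i,j). i = s+1 \<and> j < s0}"

definition cc_stored :: "nat \<Rightarrow> nat \<Rightarrow> nat \<Rightarrow> nat \<Rightarrow> (nat \<Rightarrow> nat) set" where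
  "cc_stored d s i j = {b \<in> cc_words d s. b i = j}"

text \<open>Symbols sent by helper (i,j) to repair failed server (r,l).\<close>
definition cc_sent :: "nat \<Rightarrow> nat \<Rightarrow> nat \<Rightarrow> nat \<Rightarrow> nat \<Rightarrow> nat \<Rightarrow> (nat \<Rightarrow> nat) set" where
  "cc_sent d s i j r l = {b \<in> cc_words d s. b i = j \<and> b r = l}"

definition cc_m :: "nat \<Rightarrow> nat \<Rightarrow> nat \<Rightarrow> int" where
  "cc_m n k s = (let d = n div s; s0 = n mod s in
     Min {int d ^ (s+1) - (\<Prod>i=1..s+1. (int d - int (kv i))) | kv :: nat \<Rightarrow> nat.
            (\<Sum>i=1..s+1. kv i) = k \<and> kv (s+1) \<le> s0})"

definition mds_code :: "((nat \<Rightarrow> 'a) \<Rightarrow> 'b \<Rightarrow> 'a) \<Rightarrow> nat \<Rightarrow> 'b set \<Rightarrow> bool" where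
  "mds_code enc m W \<longleftrightarrow>
     (\<forall>x y. (\<forall>c<m. x c = y c) \<longrightarrow> (\<forall>b\<in>W. enc x b = enc y b)) \<and>
     (\<forall>T. T \<subseteq> W \<and> card T = m \<longrightarrow>
        (\<forall>x y. (\<forall>b\<in>T. enc x b = enc y b) \<longrightarrow> (\<forall>c<m. x c = y c)))"

definition gamma_cc :: "nat \<Rightarrow> nat \<Rightarrow> nat \<Rightarrow> real \<Rightarrow> real" where
  "gamma_cc n k s M = (let d = n div s; s0 = n mod s;
       s1 = k mod (s+1); s2 = (k - s0) mod s in
     if s0 \<ge> k div (s+1) then
       M * real d ^ s /
         (real d ^ (s+1)
          - (real d - of_int \<lceil>real k / real (s+1)\<rceil>) ^ s1
            * (real d - of_int \<lfloor>real k / real (s+1)\<rfloor>) ^ (s+1-s1))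
     else
       M * real d ^ s /
         (real d ^ (s+1)
          - (real d - real s0)
            * (real d - of_int \<lceil>real (k - s0) / real s\<rceil>) ^ s2
            * (real d - of_int \<lfloor>real (k - s0) / real s\<rfloor>) ^ (s-s2)))"

end

theory Submission
  imports Defs "HOL-Library.FuncSet"
begin

text \<open>
  A set of k servers, k_i of them in cluster i, sees every symbol C_b such that some coordinate b_i
  is one of its positions in cluster i, so it misses a box of prod_i (d - k_i) symbols. Hence any
  k servers see at least m = d^(s+1) - max prod_i (d - k_i) symbols and recover the file by the MDS
  property. Under sum_i k_i = k and k_(s+1) <= s_0 the product is maximised by smoothing: moving a
  unit from k_i to k_j when k_i >= k_j + 2 never decreases it. So the maximiser is balanced, or, if
  the cap on cluster s+1 binds, has k_(s+1) = s_0 and the other coordinates balanced; these are the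
  two cases of gamma_cc. Every server stores d^s symbols and every helper sends d^(s-1) of them, so
  alpha = gamma = M d^s / m.
\<close>

definition box :: "'i set \<Rightarrow> ('i \<Rightarrow> nat set) \<Rightarrow> ('i \<Rightarrow> nat) set" where
  "box A F = {b. (\<forall>t\<in>A. b t \<in> F t) \<and> (\<forall>t. t \<notin> A \<longrightarrow> b t = 0)}"

lemma box_eq_image_PiE: "box A F = (\<lambda>f t. if t \<in> A then f t else 0) ` PiE A F"
proof (intro equalityI subsetI)
  fix b assume b: "b \<in> box A F"
  then have "b = (\<lambda>t. if t \<in> A then restrict b A t else 0)" by (auto simp: box_def fun_eq_iff)
  moreover have "restrict b A \<in> PiE A F" using b by (auto simp: box_def)
  ultimately show "b \<in> (\<lambda>f t. if t \<in> A then f t else 0) ` PiE A F" by blast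
qed (auto simp: box_def)

lemma finite_box: "finite A \<Longrightarrow> \<forall>t\<in>A. finite (F t) \<Longrightarrow> finite (box A F)"
  by (simp add: box_eq_image_PiE finite_PiE)

lemma card_box:
  assumes "finite A"
  shows "card (box A F) = (\<Prod>t\<in>A. card (F t))"
proof -
  have "inj_on (\<lambda>f t. if t \<in> A then f t else 0) (PiE A F)"
  proof (rule inj_onI)
    fix f g assume "f \<in> PiE A F" "g \<in> PiE A F" "(\<lambda>t. if t \<in> A then f t else 0) = (\<lambda>t. if t \<in> A then g t else 0)"
    then show "f = g" by (metis (no_types, lifting) PiE_ext)
  qed
  then show ?thesis by (simp add: box_eq_image_PiE card_image card_PiE[OF assms])
qed

lemma card_box_pinned:
  assumes "finite A" "P \<subseteq> A"
  shows "card (box A (\<lambda>t. if t \<in> P then {g t} else {..<d})) = d ^ (card A - card P)"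
proof -
  have "card (box A (\<lambda>t. if t \<in> P then {g t} else {..<d})) = (\<Prod>t\<in>A. if t \<in> P then 1 else d)"
    unfolding card_box[OF assms(1)] by (intro prod.cong) auto
  also have "\<dots> = d ^ card (A - P)"
    using prod.If_cases[OF assms(1), of "\<lambda>t. t \<in> P" "\<lambda>_. 1" "\<lambda>_. d"] by (simp add: Diff_eq)
  also have "card (A - P) = card A - card P"
    using assms finite_subset by (intro card_Diff_subset) auto
  finally show ?thesis .
qed

section \<open>Balanced vectors maximise products of differences\<close>

definition balanced_on :: "'i set \<Rightarrow> ('i \<Rightarrow> nat) \<Rightarrow> bool" where
  "balanced_on I x \<longleftrightarrow> (\<forall>i\<in>I. \<forall>j\<in>I. x i \<le> x j + 1)"

definition balanced_diff_prod :: "nat \<Rightarrow> nat \<Rightarrow> nat \<Rightarrow> nat" where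
  "balanced_diff_prod d m K = (d - (K div m + 1)) ^ (K mod m) * (d - K div m) ^ (m - K mod m)"

lemma prod_diff_balanced:
  fixes z :: "'i \<Rightarrow> nat"
  assumes "finite J" "J \<noteq> {}" "balanced_on J z"
  shows "(\<Prod>i\<in>J. d - z i) = balanced_diff_prod d (card J) (sum z J)"
proof -
  define a where "a = Min (z ` J)"
  have "a \<in> z ` J" unfolding a_def using assms(1,2) by (intro Min_in) auto
  then obtain i0 where i0: "i0 \<in> J" "z i0 = a" by auto
  have vals: "\<forall>i\<in>J. z i = a \<or> z i = a + 1"
  proof
    fix i assume "i \<in> J"
    moreover have "z i \<le> z i0 + 1" using assms(3) i0(1) \<open>i \<in> J\<close> unfolding balanced_on_def by blast
    ultimately have "a \<le> z i" "z i \<le> a + 1"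
      using assms(1) i0(2) unfolding a_def by auto
    then show "z i = a \<or> z i = a + 1" by linarith
  qed
  define H where "H = {i\<in>J. z i = a + 1}"
  define L where "L = {i\<in>J. z i = a}"
  have HL: "H \<inter> L = {}" "J = H \<union> L" using vals unfolding H_def L_def by auto
  have fin: "finite H" "finite L" using assms(1) unfolding H_def L_def by auto
  have cardJ: "card J = card H + card L" using card_Un_disjoint[OF fin HL(1)] HL(2) by simp
  have "card L > 0" using fin i0 unfolding L_def card_gt_0_iff by blast
  then have Hlt: "card H < card J" using cardJ by simp
  have "sum z J = card H * (a + 1) + card L * a"
    unfolding HL(2) sum.union_disjoint[OF fin HL(1)] by (simp add: H_def L_def)
  then have "sum z J = a * card J + card H" using cardJ by (simp add: algebra_simps)
  then have dm: "sum z J div card J = a" "sum z J mod card J = card H" using Hlt by auto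
  have "(\<Prod>i\<in>J. d - z i) = (d - (a + 1)) ^ card H * (d - a) ^ card L"
    unfolding HL(2) prod.union_disjoint[OF fin HL(1)] by (simp add: H_def L_def)
  then show ?thesis unfolding balanced_diff_prod_def dm using cardJ by simp
qed

lemma unit_transfer:
  fixes x :: "'i \<Rightarrow> nat"
  assumes "finite I" "i \<in> I" "j \<in> I" "x j + 2 \<le> x i" "x i \<le> d"
  defines "y \<equiv> x(i := x i - 1, j := x j + 1)"
  shows "(\<Prod>t\<in>I. d - x t) \<le> (\<Prod>t\<in>I. d - y t)"
    and "sum y I = sum x I"
    and "(\<Sum>t\<in>I. (y t)\<^sup>2) < (\<Sum>t\<in>I. (x t)\<^sup>2)"
proof -
  obtain u w where u: "d = x i + u" and w: "x i = x j + 2 + w"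
    using assms(4,5) le_iff_add by metis
  have ij: "i \<noteq> j" using assms(4) by auto
  have yi: "y i = x i - 1" and yj: "y j = x j + 1" using ij by (auto simp: y_def)
  have I_eq: "I = insert i (insert j (I - {i, j}))" using assms(2,3) by auto
  have prod_I: "prod f I = f i * f j * prod f (I - {i, j})" for f :: "'i \<Rightarrow> nat"
    by (subst (1) I_eq) (simp add: ij assms(1) mult.assoc)
  have sum_I: "sum f I = f i + f j + sum f (I - {i, j})" for f :: "'i \<Rightarrow> nat"
    by (subst (1) I_eq) (simp add: ij assms(1) add.assoc)
  have "\<forall>t\<in>I - {i, j}. y t = x t" by (auto simp: y_def)
  then have rest: "prod (\<lambda>t. d - y t) (I - {i, j}) = prod (\<lambda>t. d - x t) (I - {i, j})"
    "sum y (I - {i, j}) = sum x (I - {i, j})"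
    "sum (\<lambda>t. (y t)\<^sup>2) (I - {i, j}) = sum (\<lambda>t. (x t)\<^sup>2) (I - {i, j})"
    by (auto intro!: prod.cong sum.cong)
  have "(d - x i) * (d - x j) \<le> (d - y i) * (d - y j)"
    unfolding yi yj u w by (simp add: algebra_simps)
  then show "(\<Prod>t\<in>I. d - x t) \<le> (\<Prod>t\<in>I. d - y t)"
    unfolding prod_I[of "\<lambda>t. d - x t"] prod_I[of "\<lambda>t. d - y t"] rest by (rule mult_right_mono) simp
  show "sum y I = sum x I"
    unfolding sum_I[of x] sum_I[of y] rest yi yj using assms(4) by simp
  have "(y i)\<^sup>2 + (y j)\<^sup>2 < (x i)\<^sup>2 + (x j)\<^sup>2"
    unfolding yi yj w by (simp add: power2_eq_square algebra_simps)
  then show "(\<Sum>t\<in>I. (y t)\<^sup>2) < (\<Sum>t\<in>I. (x t)\<^sup>2)"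
    unfolding sum_I[of "\<lambda>t. (x t)\<^sup>2"] sum_I[of "\<lambda>t. (y t)\<^sup>2"] rest by simp
qed

lemma exists_balanced_smoothing:
  fixes x :: "'i \<Rightarrow> nat"
  assumes "finite I" "\<forall>t\<in>I. x t \<le> d"
  shows "\<exists>z. balanced_on I z \<and> sum z I = sum x I \<and> (\<Prod>t\<in>I. d - x t) \<le> (\<Prod>t\<in>I. d - z t)"
  using assms(2)
proof (induction "\<Sum>t\<in>I. (x t)\<^sup>2" arbitrary: x rule: less_induct)
  case less
  show ?case
  proof (cases "balanced_on I x")
    case False
    then obtain i j where ij: "i \<in> I" "j \<in> I" "x j + 2 \<le> x i"
      unfolding balanced_on_def by (auto simp: not_le)
    let ?y = "x(i := x i - 1, j := x j + 1)"
    have "x i \<le> d" using less.prems ij(1) by blast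
    note transfer = unit_transfer[OF assms(1) ij this]
    have "\<forall>t\<in>I. ?y t \<le> d" using less.prems ij by auto
    then obtain z where z: "balanced_on I z" "sum z I = sum ?y I"
      "(\<Prod>t\<in>I. d - ?y t) \<le> (\<Prod>t\<in>I. d - z t)"
      using less.hyps[OF transfer(3)] by blast
    have "sum z I = sum x I" using z(2) transfer(2) by (rule trans)
    moreover have "(\<Prod>t\<in>I. d - x t) \<le> (\<Prod>t\<in>I. d - z t)" using transfer(1) z(3) by (rule order.trans)
    ultimately show ?thesis using z(1) by blast
  qed blast
qed

lemma prod_diff_le_balanced:
  fixes x :: "'i \<Rightarrow> nat"
  assumes "finite I" "I \<noteq> {}" "\<forall>t\<in>I. x t \<le> d"
  shows "(\<Prod>t\<in>I. d - x t) \<le> balanced_diff_prod d (card I) (sum x I)"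
proof -
  obtain z where "balanced_on I z" "sum z I = sum x I" "(\<Prod>t\<in>I. d - x t) \<le> (\<Prod>t\<in>I. d - z t)"
    using exists_balanced_smoothing[OF assms(1,3)] by blast
  then show ?thesis using prod_diff_balanced[OF assms(1,2)] by simp
qed

lemma prod_diff_le_capped:
  fixes x :: "'i \<Rightarrow> nat"
  assumes "finite I" "c \<in> I" "x c \<le> u" "u < sum x I div card I" "\<forall>t\<in>I. x t \<le> d"
  shows "(\<Prod>t\<in>I. d - x t) \<le> (d - u) * balanced_diff_prod d (card I - 1) (sum x I - u)"
  using assms(3-5)
proof (induction "u - x c" arbitrary: x rule: less_induct)
  case less
  have card_pos: "0 < card I" using assms(1,2) card_gt_0_iff by blast
  consider "x c = u" | "x c < u" using less.prems(1) by linarith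
  then show ?case
  proof cases
    case 1
    have "I - {c} \<noteq> {}"
    proof
      assume "I - {c} = {}"
      then have "I = {c}" using assms(2) by auto
      then show False using less.prems(2) 1 by simp
    qed
    then have "(\<Prod>t\<in>I - {c}. d - x t) \<le> balanced_diff_prod d (card (I - {c})) (sum x (I - {c}))"
      using assms(1) less.prems(3) by (intro prod_diff_le_balanced) auto
    moreover have "sum x (I - {c}) = sum x I - u" "card (I - {c}) = card I - 1"
      using assms(1,2) 1 by (auto simp: sum_diff1_nat)
    ultimately show ?thesis
      unfolding prod.remove[OF assms(1,2)] 1 by (simp add: mult_left_mono)
  next
    case 2
    \<comment> \<open>below the average, the capped coordinate can take a unit from one at least 2 above it\<close>
    obtain j where j: "j \<in> I" "x c + 2 \<le> x j"
    proof (rule ccontr)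
      assume "\<not> thesis"
      then have "\<forall>j\<in>I. x j \<le> x c + 1" using that by fastforce
      then have "sum x I \<le> card I * (x c + 1)" using sum_bounded_above by fastforce
      also have "\<dots> < card I * (u + 1)" using 2 card_pos by simp
      also have "\<dots> \<le> card I * (sum x I div card I)"
        using less.prems(2) by (intro mult_left_mono) auto
      also have "\<dots> \<le> sum x I" by simp
      finally show False by simp
    qed
    let ?y = "x(j := x j - 1, c := x c + 1)"
    note transfer = unit_transfer[OF assms(1) j(1) assms(2) j(2), of d]
    have sum_y: "sum ?y I = sum x I" using transfer(2) less.prems(3) j(1) by blast
    have "(\<Prod>t\<in>I. d - ?y t) \<le> (d - u) * balanced_diff_prod d (card I - 1) (sum ?y I - u)"
    proof (rule less.hyps)
      show "u - ?y c < u - x c" "?y c \<le> u" using 2 by auto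
      show "u < sum ?y I div card I" using less.prems(2) sum_y by simp
      show "\<forall>t\<in>I. ?y t \<le> d" using less.prems(3) j by auto
    qed
    then show ?thesis using transfer(1) less.prems(3) j(1) sum_y by (auto intro: order.trans)
  qed
qed

lemma balanced_staircase:
  assumes "0 < m"
  shows "\<exists>z. balanced_on {1..m} z \<and> sum z {1..m} = K \<and> z m = K div m"
proof -
  define z where "z t = K div m + (if t \<le> K mod m then 1 else 0)" for t
  have "{1..m} \<inter> {t. t \<le> K mod m} = {1..K mod m}"
    using mod_less_divisor[OF assms, of K] by auto
  then have "sum z {1..m} = K"
    unfolding z_def sum.distrib by (simp add: sum.If_cases)
  then show ?thesis
    using mod_less_divisor[OF assms, of K] unfolding balanced_on_def z_def
    by (intro exI[of _ z]) (auto simp: z_def)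
qed

lemma prod_diff_less_power:
  fixes x :: "'i \<Rightarrow> nat"
  assumes "finite I" "i \<in> I" "0 < x i" "x i \<le> d"
  shows "(\<Prod>t\<in>I. d - x t) < d ^ card I"
proof -
  have "(\<Prod>t\<in>I. d - x t) = (d - x i) * (\<Prod>t\<in>I - {i}. d - x t)"
    by (rule prod.remove[OF assms(1,2)])
  also have "\<dots> \<le> (d - x i) * d ^ card (I - {i})"
    using prod_mono[of "I - {i}" "\<lambda>t. d - x t" "\<lambda>_. d"] by (intro mult_left_mono) auto
  also have "\<dots> < d * d ^ card (I - {i})"
    using assms(3,4) by (intro mult_strict_right_mono) auto
  also have "\<dots> = d ^ card I"
    using assms(1,2) by (metis card_Suc_Diff1 power_Suc)
  finally show ?thesis .
qed

section \<open>The number of chunks and the repair bandwidth\<close>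

text \<open>The largest number of codeword symbols that k servers can miss.\<close>

definition max_unseen :: "nat \<Rightarrow> nat \<Rightarrow> nat \<Rightarrow> nat \<Rightarrow> nat" where
  "max_unseen d s0 k s = (if k div (s+1) \<le> s0 then balanced_diff_prod d (s+1) k
     else (d - s0) * balanced_diff_prod d s (k - s0))"

lemma prod_diff_le_max_unseen:
  fixes kv :: "nat \<Rightarrow> nat"
  assumes "sum kv {1..s+1} = k" "kv (s+1) \<le> s0" "k \<le> d"
  shows "(\<Prod>i=1..s+1. d - kv i) \<le> max_unseen d s0 k s"
proof -
  have "\<forall>t\<in>{1..s+1}. kv t \<le> d"
    using assms(1,3) member_le_sum[of _ "{1..s+1}" kv] by fastforce
  then show ?thesis
    using prod_diff_le_balanced[of "{1..s+1}" kv d] prod_diff_le_capped[of "{1..s+1}" "s+1" kv s0 d]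
      assms(1,2) unfolding max_unseen_def by auto
qed

lemma max_unseen_attained:
  assumes "1 \<le> s"
  shows "\<exists>kv. sum kv {1..s+1} = k \<and> kv (s+1) \<le> s0 \<and> (\<Prod>i=1..s+1. d - kv i) = max_unseen d s0 k s"
proof (cases "k div (s+1) \<le> s0")
  case True
  obtain z where z: "balanced_on {1..s+1} z" "sum z {1..s+1} = k" "z (s+1) = k div (s+1)"
    using balanced_staircase[of "s+1" k] by auto
  then show ?thesis
    using True prod_diff_balanced[of "{1..s+1}" z d] unfolding max_unseen_def
    by (intro exI[of _ z]) auto
next
  case False
  obtain z where z: "balanced_on {1..s} z" "sum z {1..s} = k - s0"
    using balanced_staircase[of s "k - s0"] assms by auto
  define kv where "kv = z(s+1 := s0)"
  have "s0 \<le> k" using False div_le_dividend[of k "s+1"] by linarith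
  then have "sum kv {1..s+1} = k" using z(2) by (simp add: kv_def)
  moreover have "(\<Prod>i=1..s+1. d - kv i) = (d - s0) * (\<Prod>i=1..s. d - z i)"
    by (simp add: kv_def)
  moreover have "(\<Prod>i=1..s. d - z i) = balanced_diff_prod d s (k - s0)"
    using prod_diff_balanced[of "{1..s}" z d] z assms by simp
  ultimately show ?thesis using False unfolding max_unseen_def
    by (intro exI[of _ kv]) (simp add: kv_def)
qed

lemma max_unseen_less_power:
  assumes "1 \<le> s" "0 < k" "k \<le> d"
  shows "max_unseen d s0 k s < d ^ (s+1)"
proof -
  obtain kv where kv: "sum kv {1..s+1} = k" "(\<Prod>i=1..s+1. d - kv i) = max_unseen d s0 k s"
    using max_unseen_attained[OF assms(1)] by blast
  have "\<exists>i\<in>{1..s+1}. 0 < kv i"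
  proof (rule ccontr)
    assume "\<not> ?thesis"
    then have "sum kv {1..s+1} = 0" by simp
    with kv(1) assms(2) show False by simp
  qed
  then obtain i where i: "i \<in> {1..s+1}" "0 < kv i" by blast
  have "kv i \<le> d" using member_le_sum[of i "{1..s+1}" kv] i(1) kv(1) assms(3) by simp
  then show ?thesis using prod_diff_less_power[of "{1..s+1}" i kv d] i kv(2) by simp
qed

lemma cc_m_eq:
  assumes "1 \<le> s" "k \<le> n div s"
  shows "cc_m n k s = int (n div s) ^ (s+1) - int (max_unseen (n div s) (n mod s) k s)"
proof -
  define d where "d = n div s"
  define s0 where "s0 = n mod s"
  have kd: "k \<le> d" using assms(2) unfolding d_def .
  let ?feasible = "\<lambda>kv :: nat \<Rightarrow> nat. sum kv {1..s+1} = k \<and> kv (s+1) \<le> s0"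
  let ?val = "\<lambda>kv :: nat \<Rightarrow> nat. int d ^ (s+1) - int (\<Prod>i=1..s+1. d - kv i)"
  have "(\<Prod>i=1..s+1. int d - int (kv i)) = int (\<Prod>i=1..s+1. d - kv i)"
    if "sum kv {1..s+1} = k" for kv :: "nat \<Rightarrow> nat"
  proof -
    have "\<forall>i\<in>{1..s+1}. kv i \<le> d"
      using that kd member_le_sum[of _ "{1..s+1}" kv] by fastforce
    then show ?thesis by (simp add: of_nat_prod of_nat_diff)
  qed
  then have cc_m_Min: "cc_m n k s = Min {?val kv | kv. ?feasible kv}"
    unfolding cc_m_def Let_def d_def[symmetric] s0_def[symmetric] by (metis (no_types, lifting))
  have "(\<Prod>i=1..s+1. d - kv i) \<le> d ^ (s+1)" for kv :: "nat \<Rightarrow> nat"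
    using prod_mono[of "{1..s+1}" "\<lambda>i. d - kv i" "\<lambda>_. d"] by simp
  then have "{?val kv | kv. ?feasible kv} \<subseteq> (\<lambda>p. int d ^ (s+1) - int p) ` {..d ^ (s+1)}"
    by blast
  then have "finite {?val kv | kv. ?feasible kv}" by (rule finite_subset) simp
  moreover obtain kv where "?feasible kv" "int d ^ (s+1) - int (max_unseen d s0 k s) = ?val kv"
    using max_unseen_attained[OF assms(1), of k s0 d] by (metis (no_types, lifting))
  moreover have "int d ^ (s+1) - int (max_unseen d s0 k s) \<le> ?val kv" if "?feasible kv" for kv
  proof -
    have "(\<Prod>i=1..s+1. d - kv i) \<le> max_unseen d s0 k s"
      using that kd by (intro prod_diff_le_max_unseen) auto
    then have "int (\<Prod>i=1..s+1. d - kv i) \<le> int (max_unseen d s0 k s)" by (simp only: of_nat_le_iff)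
    then show ?thesis by linarith
  qed
  ultimately show ?thesis
    unfolding cc_m_Min d_def[symmetric] s0_def[symmetric] by (intro Min_eqI) blast+
qed

lemma nat_cc_m:
  assumes "1 \<le> s" "k \<le> n div s"
  shows "nat (cc_m n k s) = (n div s) ^ (s+1) - max_unseen (n div s) (n mod s) k s"
  unfolding cc_m_eq[OF assms] of_nat_power[symmetric] by arith

lemma cc_m_pos:
  assumes "1 \<le> s" "0 < k" "k \<le> n div s"
  shows "0 < cc_m n k s"
  unfolding cc_m_eq[OF assms(1,3)] of_nat_power[symmetric]
  using max_unseen_less_power[OF assms] by (simp only: diff_gt_0_iff_gt of_nat_less_iff)

lemma ceiling_divide_of_nat_not_dvd:
  assumes "0 < m" "K mod m \<noteq> 0"
  shows "\<lceil>real K / real m\<rceil> = int (K div m) + 1"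
proof (rule ceiling_unique)
  have K: "real K = real m * real (K div m) + real (K mod m)"
    by (metis of_nat_add of_nat_mult mult_div_mod_eq)
  have "0 < real (K mod m)" "real (K mod m) < real m" using assms by simp_all
  then show "real_of_int (int (K div m) + 1) - 1 < real K / real m"
    and "real K / real m \<le> real_of_int (int (K div m) + 1)"
    using K assms(1) by (simp_all add: field_simps)
qed

lemma real_balanced_diff_prod:
  assumes "0 < m" "K \<le> d"
  shows "real (balanced_diff_prod d m K)
    = (real d - of_int \<lceil>real K / real m\<rceil>) ^ (K mod m) * (real d - of_int \<lfloor>real K / real m\<rfloor>) ^ (m - K mod m)"
proof -
  have floor: "real (d - K div m) = real d - of_int \<lfloor>real K / real m\<rfloor>"
  proof -
    have "K div m \<le> d" using assms(2) div_le_dividend[of K m] by linarith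
    then show ?thesis by (simp add: floor_divide_of_nat_eq of_nat_diff)
  qed
  have ceiling: "real (d - (K div m + 1)) ^ (K mod m) = (real d - of_int \<lceil>real K / real m\<rceil>) ^ (K mod m)"
  proof (cases "K mod m = 0")
    case False
    have "1 < m" using False assms(1) by (cases "m = 1") auto
    moreover have "0 < K" using False by (cases "K = 0") auto
    ultimately have "K div m < K" by simp
    then show ?thesis
      using assms ceiling_divide_of_nat_not_dvd[OF assms(1) False] by (simp add: of_nat_diff add.commute)
  qed simp
  show ?thesis unfolding balanced_diff_prod_def of_nat_mult of_nat_power ceiling floor ..
qed

lemma gamma_cc_eq:
  assumes "1 \<le> s" "k \<le> n div s" "n mod s \<le> n div s"
  shows "gamma_cc n k s M = M * real (n div s) ^ s / real_of_int (cc_m n k s)"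
proof -
  define d where "d = n div s"
  define s0 where "s0 = n mod s"
  have kd: "k \<le> d" and s0d: "s0 \<le> d" using assms(2,3) unfolding d_def s0_def .
  have "real (max_unseen d s0 k s) = (if s0 \<ge> k div (s+1) then
         (real d - of_int \<lceil>real k / real (s+1)\<rceil>) ^ (k mod (s+1))
            * (real d - of_int \<lfloor>real k / real (s+1)\<rfloor>) ^ (s+1-k mod (s+1))
     else
         (real d - real s0)
            * (real d - of_int \<lceil>real (k - s0) / real s\<rceil>) ^ ((k - s0) mod s)
            * (real d - of_int \<lfloor>real (k - s0) / real s\<rfloor>) ^ (s-(k - s0) mod s))"
    using real_balanced_diff_prod[of "s+1" k d] real_balanced_diff_prod[of s "k - s0" d] assms(1) kd s0d
    unfolding max_unseen_def by (simp add: of_nat_diff mult.assoc)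
  moreover have "real_of_int (cc_m n k s) = real d ^ (s+1) - real (max_unseen d s0 k s)"
    using cc_m_eq[OF assms(1,2)] unfolding d_def s0_def by simp
  ultimately show ?thesis
    unfolding gamma_cc_def Let_def d_def[symmetric] s0_def[symmetric] by presburger
qed

section \<open>The Cubic Code on the cluster repair system\<close>

lemma cc_words_eq_box: "cc_words d s = box {1..s+1} (\<lambda>_. {..<d})"
  by (auto simp: cc_words_def box_def)

lemma card_cc_words: "card (cc_words d s) = d ^ (s+1)"
  by (simp add: cc_words_eq_box card_box)

lemma finite_cc_words: "finite (cc_words d s)"
  by (simp add: cc_words_eq_box finite_box)

lemma card_cc_stored:
  assumes "i \<in> {1..s+1}" "j < d"
  shows "card (cc_stored d s i j) = d ^ s"
proof -
  have "cc_stored d s i j = box {1..s+1} (\<lambda>t. if t \<in> {i} then {j} else {..<d})"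
    using assms by (auto simp: cc_stored_def cc_words_def box_def)
  with card_box_pinned[of "{1..s+1}" "{i}" "\<lambda>_. j" d] assms show ?thesis by simp
qed

lemma card_cc_sent:
  assumes "i \<in> {1..s+1}" "r \<in> {1..s+1}" "i \<noteq> r" "j < d" "l < d"
  shows "card (cc_sent d s i j r l) = d ^ (s - 1)"
proof -
  have "cc_sent d s i j r l = box {1..s+1} (\<lambda>t. if t \<in> {i, r} then {if t = i then j else l} else {..<d})"
    using assms by (auto simp: cc_sent_def cc_words_def box_def)
  with card_box_pinned[of "{1..s+1}" "{i, r}" "\<lambda>t. if t = i then j else l" d] assms
  show ?thesis by simp
qed

lemma card_cc_sent_download:
  assumes "1 \<le> s" "i \<in> {1..s+1}" "r \<in> {1..s+1}" "i \<noteq> r" "j < d" "l < d"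
  shows "d * card (cc_sent d s i j r l) = d ^ s"
proof -
  have "d * d ^ (s - 1) = d ^ s" using assms(1) by (simp flip: power_Suc)
  then show ?thesis using card_cc_sent[OF assms(2-)] by simp
qed

lemma fcrs_server_bounds:
  assumes "(i, j) \<in> fcrs_servers d s s0" "s0 \<le> d"
  shows "i \<in> {1..s+1}" "j < d"
  using assms by (auto simp: fcrs_servers_def)

lemma cc_repair_by_transfer:
  assumes "i \<in> {1..s+1}"
  shows "(\<forall>j<d. cc_sent d s i j r l \<subseteq> cc_stored d s i j) \<and> (\<Union>j<d. cc_sent d s i j r l) = cc_stored d s r l"
  using assms by (auto simp: cc_sent_def cc_stored_def cc_words_def)

lemma mds_code_recover:
  assumes "mds_code enc m W" "U \<subseteq> W" "m \<le> card U" "\<forall>b\<in>U. enc x b = enc y b"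
  shows "\<forall>c<m. x c = y c"
proof -
  obtain T where "T \<subseteq> U" "card T = m" using obtain_subset_with_card_n[OF assms(3)] by metis
  then show ?thesis using assms unfolding mds_code_def by blast
qed

lemma cc_unseen_eq_box:
  assumes "K \<subseteq> fcrs_servers d s s0" "s0 \<le> d"
  shows "cc_words d s - (\<Union>(i, j)\<in>K. cc_stored d s i j) = box {1..s+1} (\<lambda>t. {..<d} - {j. (t, j) \<in> K})"
  using assms fcrs_server_bounds[OF subsetD[OF assms(1)] assms(2)]
  by (auto simp: cc_words_def cc_stored_def box_def)

lemma card_cc_seen:
  assumes "K \<subseteq> fcrs_servers d s s0" "s0 \<le> d" "card K = k" "k \<le> d"
  shows "d ^ (s+1) - max_unseen d s0 k s \<le> card (\<Union>(i, j)\<in>K. cc_stored d s i j)"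
proof -
  define J where "J t = {j. (t, j) \<in> K}" for t
  define kv where "kv t = card (J t)" for t
  have J_sub: "J t \<subseteq> {..<d}" for t
    using assms(1,2) fcrs_server_bounds unfolding J_def by blast
  have "K = Sigma {1..s+1} J"
  proof (intro equalityI subsetI)
    fix p assume "p \<in> K"
    moreover obtain i j where "p = (i, j)" by fastforce
    ultimately show "p \<in> Sigma {1..s+1} J"
      using assms(1,2) fcrs_server_bounds[of i j d s s0] unfolding J_def by auto
  qed (auto simp: J_def)
  then have "sum kv {1..s+1} = k"
    using assms(3) J_sub finite_subset unfolding kv_def by (metis card_SigmaI finite_atLeastAtMost finite_lessThan)
  moreover have "kv (s+1) \<le> s0"
    using assms(1) card_mono[of "{..<s0}" "J (s+1)"] unfolding kv_def J_def fcrs_servers_def by fastforce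
  ultimately have unseen_le: "(\<Prod>t=1..s+1. d - kv t) \<le> max_unseen d s0 k s"
    using assms(4) by (rule prod_diff_le_max_unseen)
  have "card ({..<d} - J t) = d - kv t" for t
    using J_sub[of t] finite_subset[OF J_sub[of t]] by (simp add: kv_def card_Diff_subset)
  then have unseen_card: "card (cc_words d s - (\<Union>(i, j)\<in>K. cc_stored d s i j)) = (\<Prod>t=1..s+1. d - kv t)"
    unfolding cc_unseen_eq_box[OF assms(1,2)] card_box[OF finite_atLeastAtMost] J_def[symmetric] by simp
  have seen_sub: "(\<Union>(i, j)\<in>K. cc_stored d s i j) \<subseteq> cc_words d s"
    by (auto simp: cc_stored_def)
  show ?thesis
    using unseen_le unseen_card card_Diff_subset[OF finite_subset[OF seen_sub finite_cc_words] seen_sub]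
      card_mono[OF finite_cc_words seen_sub] card_cc_words[of d s] by linarith
qed

lemma cc_servers_recover:
  assumes "mds_code enc m (cc_words d s)" "m \<le> d ^ (s+1) - max_unseen d s0 k s"
    and "K \<subseteq> fcrs_servers d s s0" "card K = k" "s0 \<le> d" "k \<le> d"
    and "\<forall>(i, j)\<in>K. \<forall>b\<in>cc_stored d s i j. enc x b = enc y b"
  shows "\<forall>c<m. x c = y c"
proof (rule mds_code_recover[OF assms(1)])
  show "(\<Union>(i, j)\<in>K. cc_stored d s i j) \<subseteq> cc_words d s" by (auto simp: cc_stored_def)
  show "m \<le> card (\<Union>(i, j)\<in>K. cc_stored d s i j)"
    using assms(2) card_cc_seen[OF assms(3,5,4,6)] by linarith
  show "\<forall>b\<in>\<Union>(i, j)\<in>K. cc_stored d s i j. enc x b = enc y b" using assms(7) by blast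
qed

theorem theorem2:
  fixes n k s :: nat and M :: real
    and enc :: "(nat \<Rightarrow> 'a) \<Rightarrow> (nat \<Rightarrow> nat) \<Rightarrow> 'a"
  assumes "0 < n" "0 < k" "2 \<le> s" "s \<le> n div k"
    and "n mod s < min (n div s) s"
    and "0 < M"
    and "mds_code enc (nat (cc_m n k s)) (cc_words (n div s) s)"
  shows "0 < cc_m n k s
    \<and> \<comment> \<open>any k servers recover the file\<close>
      (\<forall>K. K \<subseteq> fcrs_servers (n div s) s (n mod s) \<and> card K = k \<longrightarrow>
         (\<forall>x y. (\<forall>(i,j)\<in>K. \<forall>b\<in>cc_stored (n div s) s i j. enc x b = enc y b)
                \<longrightarrow> (\<forall>c<nat (cc_m n k s). x c = y c)))
    \<and> \<comment> \<open>exact repair by transfer from any other cluster i in [s]\<close>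
      (\<forall>(r,l)\<in>fcrs_servers (n div s) s (n mod s). \<forall>i\<in>{1..s}. i \<noteq> r \<longrightarrow>
         (\<forall>j<n div s. cc_sent (n div s) s i j r l \<subseteq> cc_stored (n div s) s i j) \<and>
         (\<Union>j<n div s. cc_sent (n div s) s i j r l) = cc_stored (n div s) s r l)
    \<and> \<comment> \<open>storage alpha per server equals gamma_cc\<close>
      (\<forall>(i,j)\<in>fcrs_servers (n div s) s (n mod s).
         real (card (cc_stored (n div s) s i j)) * (M / real_of_int (cc_m n k s))
           = gamma_cc n k s M)
    \<and> \<comment> \<open>repair bandwidth gamma = d * beta equals gamma_cc\<close>
      (\<forall>(r,l)\<in>fcrs_servers (n div s) s (n mod s). \<forall>i\<in>{1..s}. \<forall>j<n div s. i \<noteq> r \<longrightarrow>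
         real (n div s) * (real (card (cc_sent (n div s) s i j r l)) * (M / real_of_int (cc_m n k s)))
           = gamma_cc n k s M)"
proof -
  define d where "d = n div s"
  define s0 where "s0 = n mod s"
  have s1: "1 \<le> s" using assms(3) by simp
  have kd: "k \<le> d"
    using assms(2,4) s1 unfolding d_def by (simp add: less_eq_div_iff_mult_less_eq mult.commute)
  have s0d: "s0 \<le> d" using assms(5) unfolding d_def s0_def by simp
  have m_nat: "nat (cc_m n k s) = d ^ (s+1) - max_unseen d s0 k s"
    using nat_cc_m[OF s1, of k n] kd unfolding d_def s0_def by simp
  have gamma: "gamma_cc n k s M = M * real d ^ s / real_of_int (cc_m n k s)"
    using gamma_cc_eq[OF s1] kd s0d unfolding d_def s0_def by simp
  have download: "real d * real (card (cc_sent d s i j r l)) = real d ^ s"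
    if "(r, l) \<in> fcrs_servers d s s0" "i \<in> {1..s}" "j < d" "i \<noteq> r" for r l i j
  proof -
    have "d * card (cc_sent d s i j r l) = d ^ s"
      using card_cc_sent_download[OF s1] fcrs_server_bounds[OF that(1) s0d] that by simp
    then show ?thesis by (metis of_nat_mult of_nat_power)
  qed
  show ?thesis
    unfolding d_def[symmetric] s0_def[symmetric]
    using cc_m_pos[OF s1 assms(2) kd[unfolded d_def]] cc_servers_recover[OF assms(7)[folded d_def] _ _ _ s0d kd]
      m_nat cc_repair_by_transfer[of _ s d] card_cc_stored fcrs_server_bounds[OF _ s0d]
    by (auto simp: gamma download)
qed

end
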